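(* Let $A,B$ be nonzero ideals of $D$ with $(A+B)^{\ast}=D$. (i) If $I$ is a $\ast$-homog ideal of $D$ and $AB\subseteq I$, then $A\subseteq I$ or $B\subseteq I$. (ii) If $B$ is a $\ast$-homog ideal, then $(AB)^{\ast}D_{M(B)}\cap D=B$.
   Context: $D$ is an integral domain and $\ast$ is a star operation on $D$ of finite character. A $\ast$-ideal is a nonzero fractional ideal $I$ with $I^\ast=I$; it is of finite type if $I=J^\ast$ for some nonzero finitely generated $J$. A maximal $\ast$-ideal is an integral $\ast$-ideal maximal among proper integral $\ast$-ideals. A $\ast$-homog ideal of $D$ is an integral $\ast$-ideal $I$ of finite type with $I\subsetneq D$ such that $(J+L)^{\ast}\neq D$ for every pair $J,L$ of proper integral $\ast$-ideals of finite type containing $I$. Every $\ast$-homog ideal $I$ lies in exactly one maximal $\ast$-ideal, denoted $M(I)$. *)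

theory Defs
  imports Main
begin

text \<open>The integral domain D is modelled as a subset of a field type 'k which is
its quotient field (every element of 'k is a quotient of elements of D).
Fractional ideals are subsets of 'k.\<close>

definition subring :: "('k::field) set \<Rightarrow> bool" where
  "subring D \<longleftrightarrow> 0 \<in> D \<and> 1 \<in> D \<and>
     (\<forall>x\<in>D. \<forall>y\<in>D. x + y \<in> D \<and> x - y \<in> D \<and> x * y \<in> D)"

definition domain_with_qf :: "('k::field) set \<Rightarrow> bool" where
  "domain_with_qf D \<longleftrightarrow> subring D \<and>
     (\<forall>x. \<exists>a\<in>D. \<exists>b\<in>D. b \<noteq> 0 \<and> x = a / b)"

definition dmod :: "('k::field) set \<Rightarrow> 'k set \<Rightarrow> bool" where
  "dmod D I \<longleftrightarrow> 0 \<in> I \<and> (\<forall>x\<in>I. \<forall>y\<in>I. x + y \<in> I) \<and> (\<forall>d\<in>D. \<forall>x\<in>I. d * x \<in> I)"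

definition frac_ideal :: "('k::field) set \<Rightarrow> 'k set \<Rightarrow> bool" where
  "frac_ideal D I \<longleftrightarrow> dmod D I \<and> I \<noteq> {0} \<and> (\<exists>d\<in>D. d \<noteq> 0 \<and> (\<forall>x\<in>I. d * x \<in> D))"

definition dgen :: "('k::field) set \<Rightarrow> 'k set \<Rightarrow> 'k set" where
  "dgen D S = {\<Sum>i<(n::nat). c i * s i | n c s. \<forall>i<n. c i \<in> D \<and> s i \<in> S}"

definition fg_ideal :: "('k::field) set \<Rightarrow> 'k set \<Rightarrow> bool" where
  "fg_ideal D J \<longleftrightarrow> frac_ideal D J \<and> (\<exists>S. finite S \<and> J = dgen D S)"

definition ideal_sum :: "('k::field) set \<Rightarrow> 'k set \<Rightarrow> 'k set" where
  "ideal_sum I J = {x + y | x y. x \<in> I \<and> y \<in> J}"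

definition ideal_prod :: "('k::field) set \<Rightarrow> 'k set \<Rightarrow> 'k set" where
  "ideal_prod I J = {\<Sum>i<(n::nat). f i * g i | n f g. \<forall>i<n. f i \<in> I \<and> g i \<in> J}"

definition star_operation :: "('k::field) set \<Rightarrow> ('k set \<Rightarrow> 'k set) \<Rightarrow> bool" where
  "star_operation D st \<longleftrightarrow>
     (\<forall>I. frac_ideal D I \<longrightarrow> frac_ideal D (st I)) \<and>
     (\<forall>x. x \<noteq> 0 \<longrightarrow> st {d * x | d. d \<in> D} = {d * x | d. d \<in> D}) \<and>
     (\<forall>x I. x \<noteq> 0 \<longrightarrow> frac_ideal D I \<longrightarrow> st ((*) x ` I) = (*) x ` st I) \<and>
     (\<forall>I. frac_ideal D I \<longrightarrow> I \<subseteq> st I) \<and>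
     (\<forall>I J. frac_ideal D I \<longrightarrow> frac_ideal D J \<longrightarrow> I \<subseteq> J \<longrightarrow> st I \<subseteq> st J) \<and>
     (\<forall>I. frac_ideal D I \<longrightarrow> st (st I) = st I)"

definition finite_character :: "('k::field) set \<Rightarrow> ('k set \<Rightarrow> 'k set) \<Rightarrow> bool" where
  "finite_character D st \<longleftrightarrow>
     (\<forall>I. frac_ideal D I \<longrightarrow> st I = \<Union>{st J | J. fg_ideal D J \<and> J \<subseteq> I})"

definition star_ideal :: "('k::field) set \<Rightarrow> ('k set \<Rightarrow> 'k set) \<Rightarrow> 'k set \<Rightarrow> bool" where
  "star_ideal D st I \<longleftrightarrow> frac_ideal D I \<and> st I = I"

definition star_fin_type :: "('k::field) set \<Rightarrow> ('k set \<Rightarrow> 'k set) \<Rightarrow> 'k set \<Rightarrow> bool" where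
  "star_fin_type D st I \<longleftrightarrow> star_ideal D st I \<and> (\<exists>J. fg_ideal D J \<and> I = st J)"

definition max_star_ideal :: "('k::field) set \<Rightarrow> ('k set \<Rightarrow> 'k set) \<Rightarrow> 'k set \<Rightarrow> bool" where
  "max_star_ideal D st M \<longleftrightarrow> star_ideal D st M \<and> M \<subseteq> D \<and> M \<noteq> D \<and>
     (\<forall>N. star_ideal D st N \<and> N \<subseteq> D \<and> N \<noteq> D \<and> M \<subseteq> N \<longrightarrow> N = M)"

definition star_homog :: "('k::field) set \<Rightarrow> ('k set \<Rightarrow> 'k set) \<Rightarrow> 'k set \<Rightarrow> bool" where
  "star_homog D st I \<longleftrightarrow> star_fin_type D st I \<and> I \<subseteq> D \<and> I \<noteq> D \<and>
     (\<forall>J L. star_fin_type D st J \<and> J \<subseteq> D \<and> J \<noteq> D \<and> I \<subseteq> J \<and>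
            star_fin_type D st L \<and> L \<subseteq> D \<and> L \<noteq> D \<and> I \<subseteq> L
            \<longrightarrow> st (ideal_sum J L) \<noteq> D)"

definition M_of :: "('k::field) set \<Rightarrow> ('k set \<Rightarrow> 'k set) \<Rightarrow> 'k set \<Rightarrow> 'k set" where
  "M_of D st I = (THE M. max_star_ideal D st M \<and> I \<subseteq> M)"

definition localization :: "('k::field) set \<Rightarrow> 'k set \<Rightarrow> 'k set" where
  "localization D P = {a / s | a s. a \<in> D \<and> s \<in> D \<and> s \<notin> P}"

end

theory Submission
  imports Defs
begin

text \<open>
  (i) By finite character, \<open>(A + B)\<^sup>* = D\<close> is already witnessed by finitely many elements
  \<open>a\<^sub>i \<in> A\<close>, \<open>b\<^sub>j \<in> B\<close>. Adjoining them to the homogeneous ideal \<open>I\<close> gives \<open>*\<close>-ideals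
  \<open>J = (I, a\<^sub>i)\<^sup>*\<close> and \<open>L = (I, b\<^sub>j)\<^sup>*\<close> of finite type with \<open>(J + L)\<^sup>* = D\<close>, so by homogeneity one of
  them, say \<open>J\<close>, equals \<open>D\<close>. Every \<open>b \<in> B\<close> satisfies \<open>b (I, a\<^sub>i) \<subseteq> I\<close>, hence
  \<open>b D = (b (I, a\<^sub>i))\<^sup>* \<subseteq> I\<close>.

  (ii) A maximal \<open>*\<close>-ideal \<open>M\<close> above \<open>B\<close> is prime. For \<open>s \<in> D - M\<close>, finite character
  applied to \<open>(M, s)\<^sup>* = D\<close> yields finitely many \<open>t\<^sub>k \<in> M\<close> such that every ideal containing
  the \<open>t\<^sub>k\<close> and \<open>s\<close> has \<open>*\<close>-closure \<open>D\<close>; homogeneity of \<open>B\<close>, applied to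
  \<open>(B, t\<^sub>k)\<^sup>* \<subseteq> M\<close> and \<open>(B, s)\<^sup>*\<close>, forces \<open>(B, s)\<^sup>* = D\<close>. This makes \<open>M\<close> unique, and
  an element \<open>x \<in> (AB)\<^sup>*D\<^sub>M \<inter> D\<close> has \<open>s x \<in> B\<close> for some \<open>s \<notin> M\<close>, so \<open>x (B, s) \<subseteq> B\<close> and
  \<open>x \<in> B\<close> as in (i). Conversely \<open>b = (a b) a\<^sup>-\<^sup>1\<close> for any \<open>a \<in> A - M\<close>.
\<close>

inductive_set finsums :: "'a::monoid_add set \<Rightarrow> 'a set" for S where
  finsums_zero: "0 \<in> finsums S"
| finsums_add: "x \<in> S \<Longrightarrow> y \<in> finsums S \<Longrightarrow> x + y \<in> finsums S"

definition elem_prods :: "'a::times set \<Rightarrow> 'a set \<Rightarrow> 'a set" where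
  "elem_prods A B = {a * b | a b. a \<in> A \<and> b \<in> B}"

lemma finsums_least:
  assumes "0 \<in> T" "\<And>x y. x \<in> S \<Longrightarrow> y \<in> T \<Longrightarrow> x + y \<in> T"
  shows "finsums S \<subseteq> T"
proof
  fix z assume "z \<in> finsums S" then show "z \<in> T" by induction (auto intro: assms)
qed

lemma finsums_base: "S \<subseteq> finsums S"
  using finsums_add[OF _ finsums_zero] by force

lemma finsums_mono: "S \<subseteq> S' \<Longrightarrow> finsums S \<subseteq> finsums S'"
  by (rule finsums_least) (auto intro: finsums.intros)

lemma finsums_add_closed: "x \<in> finsums S \<Longrightarrow> y \<in> finsums S \<Longrightarrow> x + y \<in> finsums S"
  by (induction x rule: finsums.induct) (auto simp: add.assoc intro: finsums.intros)

lemma finsums_mult: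
  fixes d :: "'a::semiring_0"
  assumes "\<And>x. x \<in> S \<Longrightarrow> d * x \<in> S" "x \<in> finsums S"
  shows "d * x \<in> finsums S"
  using assms(2) by induction (auto simp: distrib_left intro: finsums.intros assms(1))

lemma elem_prods_mono: "A \<subseteq> A' \<Longrightarrow> B \<subseteq> B' \<Longrightarrow> elem_prods A B \<subseteq> elem_prods A' B'"
  unfolding elem_prods_def by blast

lemma sums_of_prods_eq_finsums:
  fixes A B :: "'a::semiring_0 set"
  shows "{\<Sum>i<(n::nat). f i * g i | n f g. \<forall>i<n. f i \<in> A \<and> g i \<in> B} = finsums (elem_prods A B)"
proof
  show "{\<Sum>i<(n::nat). f i * g i | n f g. \<forall>i<n. f i \<in> A \<and> g i \<in> B} \<subseteq> finsums (elem_prods A B)"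
  proof clarify
    fix n and f g :: "nat \<Rightarrow> 'a"
    show "\<forall>i<n. f i \<in> A \<and> g i \<in> B \<Longrightarrow> (\<Sum>i<n. f i * g i) \<in> finsums (elem_prods A B)"
    proof (induction n)
      case 0 then show ?case by (simp add: finsums_zero)
    next
      case (Suc n)
      then have "f n * g n \<in> elem_prods A B" by (auto simp: elem_prods_def)
      with Suc show ?case by (simp add: add.commute finsums_add)
    qed
  qed
next
  show "finsums (elem_prods A B) \<subseteq> {\<Sum>i<(n::nat). f i * g i | n f g. \<forall>i<n. f i \<in> A \<and> g i \<in> B}"
  proof (rule finsums_least)
    show "0 \<in> {\<Sum>i<(n::nat). f i * g i | n f g. \<forall>i<n. f i \<in> A \<and> g i \<in> B}"
      by (rule CollectI, rule exI[of _ 0]) auto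
  next
    fix x y
    assume "x \<in> elem_prods A B" "y \<in> {\<Sum>i<(n::nat). f i * g i | n f g. \<forall>i<n. f i \<in> A \<and> g i \<in> B}"
    then obtain a b m f g where ab: "a \<in> A" "b \<in> B" "x = a * b"
      and y: "y = (\<Sum>i<(m::nat). f i * g i)" "\<forall>i<m. f i \<in> A \<and> g i \<in> B"
      unfolding elem_prods_def by blast
    have "(\<Sum>i<m. (f(m:=a)) i * (g(m:=b)) i) = (\<Sum>i<m. f i * g i)" by (rule sum.cong) auto
    then have "x + y = (\<Sum>i<Suc m. (f(m:=a)) i * (g(m:=b)) i)"
      using ab y by (simp add: add.commute)
    moreover have "\<forall>i<Suc m. (f(m:=a)) i \<in> A \<and> (g(m:=b)) i \<in> B" using y(2) ab by auto
    ultimately show "x + y \<in> {\<Sum>i<(n::nat). f i * g i | n f g. \<forall>i<n. f i \<in> A \<and> g i \<in> B}"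
      by blast
  qed
qed

lemma ideal_prod_eq_finsums: "ideal_prod A B = finsums (elem_prods A B)"
  unfolding ideal_prod_def by (rule sums_of_prods_eq_finsums)

lemma mult_mem_ideal_prod:
  assumes "a \<in> A" "b \<in> B"
  shows "a * b \<in> ideal_prod A B"
proof -
  have "a * b \<in> elem_prods A B" unfolding elem_prods_def using assms by blast
  then show ?thesis unfolding ideal_prod_eq_finsums using finsums_base[of "elem_prods A B"] by blast
qed

locale star_domain =
  fixes D :: "'k::field set" and st :: "'k set \<Rightarrow> 'k set"
  assumes domain: "domain_with_qf D"
    and star: "star_operation D st"
    and finite_char: "finite_character D st"
begin

lemma D_zero: "0 \<in> D" and D_one: "1 \<in> D"
  and D_add: "x \<in> D \<Longrightarrow> y \<in> D \<Longrightarrow> x + y \<in> D"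
  and D_mult: "x \<in> D \<Longrightarrow> y \<in> D \<Longrightarrow> x * y \<in> D"
  using domain unfolding domain_with_qf_def subring_def by blast+

lemma dmodD:
  assumes "dmod D N"
  shows "0 \<in> N" "x \<in> N \<Longrightarrow> y \<in> N \<Longrightarrow> x + y \<in> N" "d \<in> D \<Longrightarrow> x \<in> N \<Longrightarrow> d * x \<in> N"
  using assms unfolding dmod_def by blast+

lemma dmod_D: "dmod D D"
  unfolding dmod_def using D_zero D_add D_mult by blast

lemma D_subset_if_one_mem: "dmod D N \<Longrightarrow> 1 \<in> N \<Longrightarrow> D \<subseteq> N"
  using dmodD(3) by force

lemma dmod_finsums:
  assumes "\<And>d x. d \<in> D \<Longrightarrow> x \<in> S \<Longrightarrow> d * x \<in> S"
  shows "dmod D (finsums S)"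
  unfolding dmod_def using assms by (blast intro: finsums_zero finsums_add_closed finsums_mult)

lemma dgen_eq_finsums: "dgen D S = finsums (elem_prods D S)"
  unfolding dgen_def by (rule sums_of_prods_eq_finsums)

lemma dmod_ideal_prod:
  assumes "dmod D A"
  shows "dmod D (ideal_prod A B)"
  unfolding ideal_prod_eq_finsums
proof (rule dmod_finsums)
  fix d x assume "d \<in> D" "x \<in> elem_prods A B"
  then obtain a b where "a \<in> A" "b \<in> B" "d * x = (d * a) * b"
    unfolding elem_prods_def by (auto simp: mult.assoc)
  then show "d * x \<in> elem_prods A B"
    unfolding elem_prods_def using dmodD(3)[OF assms \<open>d \<in> D\<close>] by blast
qed

lemma ideal_prod_subset_right:
  assumes "dmod D B" "A \<subseteq> D"
  shows "ideal_prod A B \<subseteq> B"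
  unfolding ideal_prod_eq_finsums
proof (rule finsums_least)
  show "0 \<in> B" using dmodD(1)[OF assms(1)] .
  fix u y assume "u \<in> elem_prods A B" "y \<in> B"
  then obtain a b where "a \<in> A" "b \<in> B" "u = a * b" unfolding elem_prods_def by blast
  then show "u + y \<in> B" using dmodD(2,3)[OF assms(1)] assms(2) \<open>y \<in> B\<close> by blast
qed

lemma dgen_eq_ideal_prod: "dgen D S = ideal_prod D S"
  unfolding dgen_def ideal_prod_def ..

lemma dmod_dgen: "dmod D (dgen D S)"
  unfolding dgen_eq_ideal_prod using dmod_ideal_prod[OF dmod_D] .

lemma dgen_base: "S \<subseteq> dgen D S"
proof
  fix x assume "x \<in> S"
  then have "1 * x \<in> elem_prods D S" unfolding elem_prods_def using D_one by blast
  then show "x \<in> dgen D S" unfolding dgen_eq_finsums using finsums_base by force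
qed

lemma dgen_least: "dmod D N \<Longrightarrow> S \<subseteq> N \<Longrightarrow> dgen D S \<subseteq> N"
  unfolding dgen_eq_finsums elem_prods_def
  by (rule finsums_least) (auto dest: dmodD)

lemma dgen_mono: "S \<subseteq> S' \<Longrightarrow> dgen D S \<subseteq> dgen D S'"
  using dgen_least[OF dmod_dgen] dgen_base by blast

lemma dgen_mem_finite:
  assumes "x \<in> dgen D Y"
  shows "\<exists>T. finite T \<and> T \<subseteq> Y \<and> x \<in> dgen D T"
  using assms unfolding dgen_eq_finsums
proof induction
  case finsums_zero
  show ?case by (intro exI[of _ "{}"]) (simp add: finsums.finsums_zero)
next
  case (finsums_add x z)
  then obtain T where T: "finite T" "T \<subseteq> Y" "z \<in> finsums (elem_prods D T)" by blast
  from finsums_add(1) obtain d y where "d \<in> D" "y \<in> Y" "x = d * y" unfolding elem_prods_def by blast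
  then have "x \<in> elem_prods D (insert y T)" unfolding elem_prods_def by blast
  moreover have "z \<in> finsums (elem_prods D (insert y T))"
    using T(3) finsums_mono[OF elem_prods_mono[of D D T "insert y T"]] by blast
  ultimately show ?case
    using T(1,2) \<open>y \<in> Y\<close> by (intro exI[of _ "insert y T"]) (simp add: finsums.finsums_add)
qed

lemma dgen_finite_subset:
  assumes "finite S" "S \<subseteq> dgen D Y"
  shows "\<exists>T. finite T \<and> T \<subseteq> Y \<and> S \<subseteq> dgen D T"
  using assms
proof (induction S rule: finite_induct)
  case empty
  show ?case by (intro exI[of _ "{}"]) simp
next
  case (insert x S)
  from insert.prems have "x \<in> dgen D Y" by blast
  then obtain T1 where T1: "finite T1" "T1 \<subseteq> Y" "x \<in> dgen D T1"
    using dgen_mem_finite by blast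
  obtain T2 where T2: "finite T2" "T2 \<subseteq> Y" "S \<subseteq> dgen D T2"
    using insert.IH insert.prems by blast
  have "dgen D T1 \<subseteq> dgen D (T1 \<union> T2)" "dgen D T2 \<subseteq> dgen D (T1 \<union> T2)"
    by (rule dgen_mono, blast)+
  with T1 T2 show ?case by (intro exI[of _ "T1 \<union> T2"]) blast
qed

lemma dmod_colon:
  assumes "dmod D I" "b \<in> D"
  shows "dmod D {x. b * x \<in> I}" "I \<subseteq> {x. b * x \<in> I}"
proof -
  show "dmod D {x. b * x \<in> I}"
    unfolding dmod_def using dmodD[OF assms(1)]
    by (simp add: distrib_left mult.left_commute[of b])
  show "I \<subseteq> {x. b * x \<in> I}" using dmodD(3)[OF assms] by blast
qed

lemma dmod_ideal_sum:
  assumes "dmod D A" "dmod D B"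
  shows "dmod D (ideal_sum A B)"
  unfolding dmod_def
proof (intro conjI ballI)
  show "0 \<in> ideal_sum A B"
    unfolding ideal_sum_def using dmodD(1)[OF assms(1)] dmodD(1)[OF assms(2)] by force
next
  fix x y assume "x \<in> ideal_sum A B" "y \<in> ideal_sum A B"
  then obtain a1 b1 a2 b2 where "a1 \<in> A" "b1 \<in> B" "a2 \<in> A" "b2 \<in> B"
    and "x + y = (a1 + a2) + (b1 + b2)"
    unfolding ideal_sum_def by (auto simp: algebra_simps)
  then show "x + y \<in> ideal_sum A B"
    unfolding ideal_sum_def using dmodD(2)[OF assms(1)] dmodD(2)[OF assms(2)] by blast
next
  fix d x assume "d \<in> D" "x \<in> ideal_sum A B"
  then obtain a b where "a \<in> A" "b \<in> B" "d * x = d * a + d * b"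
    unfolding ideal_sum_def by (auto simp: algebra_simps)
  then show "d * x \<in> ideal_sum A B"
    unfolding ideal_sum_def using dmodD(3)[OF assms(1) \<open>d \<in> D\<close>] dmodD(3)[OF assms(2) \<open>d \<in> D\<close>]
    by blast
qed

lemma ideal_sum_left:
  assumes "dmod D B" shows "A \<subseteq> ideal_sum A B"
proof
  fix x assume "x \<in> A"
  moreover have "x = x + 0" "0 \<in> B" using dmodD(1)[OF assms] by simp_all
  ultimately show "x \<in> ideal_sum A B" unfolding ideal_sum_def by blast
qed

lemma ideal_sum_right:
  assumes "dmod D A" shows "B \<subseteq> ideal_sum A B"
proof
  fix x assume "x \<in> B"
  moreover have "x = 0 + x" "0 \<in> A" using dmodD(1)[OF assms] by simp_all
  ultimately show "x \<in> ideal_sum A B" unfolding ideal_sum_def by blast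
qed

lemma ideal_sum_subset_D: "A \<subseteq> D \<Longrightarrow> B \<subseteq> D \<Longrightarrow> ideal_sum A B \<subseteq> D"
  unfolding ideal_sum_def using D_add by blast

lemma dgen_Un_eq_ideal_sum:
  assumes "dmod D A" "dmod D B"
  shows "dgen D (A \<union> B) = ideal_sum A B"
proof
  have "A \<union> B \<subseteq> ideal_sum A B"
    using ideal_sum_left[OF assms(2)] ideal_sum_right[OF assms(1)] by (rule Un_least)
  then show "dgen D (A \<union> B) \<subseteq> ideal_sum A B"
    by (rule dgen_least[OF dmod_ideal_sum[OF assms]])
  have "A \<union> B \<subseteq> dgen D (A \<union> B)" by (rule dgen_base)
  then show "ideal_sum A B \<subseteq> dgen D (A \<union> B)"
    unfolding ideal_sum_def using dmodD(2)[OF dmod_dgen] by blast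
qed

lemma frac_idealI:
  assumes "dmod D I" "I \<subseteq> D" "I \<noteq> {0}"
  shows "frac_ideal D I"
proof -
  have "\<forall>x\<in>I. 1 * x \<in> D" using assms(2) by auto
  then show ?thesis unfolding frac_ideal_def using assms(1,3) D_one one_neq_zero by blast
qed

lemma frac_ideal_dmod: "frac_ideal D I \<Longrightarrow> dmod D I"
  unfolding frac_ideal_def by blast

lemma frac_ideal_nonzero: "frac_ideal D I \<Longrightarrow> \<exists>x\<in>I. x \<noteq> 0"
  unfolding frac_ideal_def dmod_def by blast

lemma frac_ideal_dgen:
  assumes "Y \<subseteq> D" "y \<in> Y" "y \<noteq> 0"
  shows "frac_ideal D (dgen D Y)"
proof (rule frac_idealI[OF dmod_dgen])
  show "dgen D Y \<subseteq> D" using dgen_least[OF dmod_D assms(1)] .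
  show "dgen D Y \<noteq> {0}" using dgen_base[of Y] assms(2,3) by blast
qed

lemma frac_ideal_sum:
  assumes "frac_ideal D A" "dmod D B" "A \<subseteq> D" "B \<subseteq> D"
  shows "frac_ideal D (ideal_sum A B)"
proof (rule frac_idealI)
  show "dmod D (ideal_sum A B)" using dmod_ideal_sum[OF frac_ideal_dmod[OF assms(1)] assms(2)] .
  show "ideal_sum A B \<subseteq> D" using ideal_sum_subset_D[OF assms(3,4)] .
  show "ideal_sum A B \<noteq> {0}"
    using frac_ideal_nonzero[OF assms(1)] ideal_sum_left[OF assms(2), of A] by blast
qed

lemmas star_unfolded = star[unfolded star_operation_def]
lemmas st_frac_ideal = star_unfolded[THEN conjunct1, rule_format]
  and st_principal = star_unfolded[THEN conjunct2, THEN conjunct1, rule_format]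
  and st_mult = star_unfolded[THEN conjunct2, THEN conjunct2, THEN conjunct1, rule_format]
  and st_ext = star_unfolded[THEN conjunct2, THEN conjunct2, THEN conjunct2, THEN conjunct1, rule_format]
  and st_mono = star_unfolded[THEN conjunct2, THEN conjunct2, THEN conjunct2, THEN conjunct2,
      THEN conjunct1, rule_format]
  and st_idem = star_unfolded[THEN conjunct2, THEN conjunct2, THEN conjunct2, THEN conjunct2,
      THEN conjunct2, rule_format]

lemma st_D: "st D = D"
proof -
  have "st {d * 1 | d. d \<in> D} = {d * 1 | d. d \<in> D}"
    using st_principal[of 1] by simp
  moreover have "{d * 1 | d. d \<in> D} = D" by simp
  ultimately show ?thesis by simp
qed

lemma frac_ideal_D: "frac_ideal D D"
  using frac_idealI[OF dmod_D] D_one by force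

lemma st_subset_D: "frac_ideal D I \<Longrightarrow> I \<subseteq> D \<Longrightarrow> st I \<subseteq> D"
  using st_mono[OF _ frac_ideal_D] st_D by blast

lemma st_eq_D_if_one_mem:
  assumes "frac_ideal D I" "I \<subseteq> D" "1 \<in> st I"
  shows "st I = D"
  using st_subset_D[OF assms(1,2)] D_subset_if_one_mem[OF frac_ideal_dmod[OF st_frac_ideal[OF assms(1)]] assms(3)]
  by (rule antisym)

lemma star_ideal_st: "frac_ideal D I \<Longrightarrow> star_ideal D st (st I)"
  unfolding star_ideal_def using st_frac_ideal st_idem by blast

lemma star_fin_type_frac_ideal: "star_fin_type D st I \<Longrightarrow> frac_ideal D I"
  and star_fin_type_star_ideal: "star_fin_type D st I \<Longrightarrow> star_ideal D st I"
  unfolding star_fin_type_def star_ideal_def by blast+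

lemma frac_ideal_scale:
  assumes "frac_ideal D X" "b \<in> D" "b \<noteq> 0"
  shows "frac_ideal D ((*) b ` X)"
proof -
  note dm = dmodD[OF frac_ideal_dmod[OF assms(1)]]
  have "dmod D ((*) b ` X)"
    unfolding dmod_def
  proof (intro conjI ballI)
    show "0 \<in> (*) b ` X" using dm(1) by force
    fix x y assume "x \<in> (*) b ` X" "y \<in> (*) b ` X"
    then show "x + y \<in> (*) b ` X" using dm(2) by (auto simp: distrib_left[symmetric])
  next
    fix d x assume "d \<in> D" "x \<in> (*) b ` X"
    then show "d * x \<in> (*) b ` X" using dm(3) by (auto simp: mult.left_commute)
  qed
  moreover have "(*) b ` X \<noteq> {0}"
  proof -
    obtain x where "x \<in> X" "x \<noteq> 0" using frac_ideal_nonzero[OF assms(1)] by blast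
    then have "b * x \<in> (*) b ` X" "b * x \<noteq> 0" using assms(3) by auto
    then show ?thesis by blast
  qed
  moreover obtain d where "d \<in> D" "d \<noteq> 0" "\<forall>x\<in>X. d * x \<in> D"
    using assms(1) unfolding frac_ideal_def by blast
  then have "\<forall>y\<in>(*) b ` X. d * y \<in> D" using assms(2) D_mult by (auto simp: mult.left_commute)
  ultimately show ?thesis unfolding frac_ideal_def using \<open>d \<in> D\<close> \<open>d \<noteq> 0\<close> by blast
qed

text \<open>The cancellation property behind both parts: if \<open>X\<^sup>* = D\<close> and \<open>b X \<subseteq> I\<close>, then
  \<open>b D = (b X)\<^sup>* \<subseteq> I\<^sup>* = I\<close>.\<close>

lemma star_ideal_cancel:
  assumes X: "frac_ideal D X" "st X = D" and "b \<in> D" "X \<subseteq> {x. b * x \<in> I}"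
    and I: "star_ideal D st I"
  shows "b \<in> I"
proof (cases "b = 0")
  case True
  then show ?thesis using I dmodD(1) frac_ideal_dmod unfolding star_ideal_def by blast
next
  case False
  have fI: "frac_ideal D I" "st I = I" using I unfolding star_ideal_def by blast+
  have "(*) b ` X \<subseteq> I" using assms(4) by blast
  then have "st ((*) b ` X) \<subseteq> I" using st_mono[OF frac_ideal_scale[OF X(1) \<open>b \<in> D\<close> False] fI(1)] fI(2) by simp
  moreover have "st ((*) b ` X) = (*) b ` D" using st_mult[OF False X(1)] X(2) by simp
  ultimately show ?thesis using D_one by force
qed

lemma finite_generators_of_star_eq_D:
  assumes "frac_ideal D (dgen D Y)" "st (dgen D Y) = D"
  obtains T where "finite T" "T \<subseteq> Y"
    "\<And>L. frac_ideal D L \<Longrightarrow> L \<subseteq> D \<Longrightarrow> T \<subseteq> L \<Longrightarrow> st L = D"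
proof -
  have "st (dgen D Y) = \<Union>{st J | J. fg_ideal D J \<and> J \<subseteq> dgen D Y}"
    using finite_char assms(1) unfolding finite_character_def by blast
  then have "1 \<in> \<Union>{st J | J. fg_ideal D J \<and> J \<subseteq> dgen D Y}"
    using assms(2) D_one by simp
  then obtain J where J: "fg_ideal D J" "J \<subseteq> dgen D Y" "1 \<in> st J" by blast
  then obtain S where S: "finite S" "J = dgen D S" unfolding fg_ideal_def by blast
  have "S \<subseteq> dgen D Y" using dgen_base[of S] J(2) unfolding S(2) by (rule order_trans)
  then obtain T where T: "finite T" "T \<subseteq> Y" "S \<subseteq> dgen D T"
    using dgen_finite_subset[OF S(1) \<open>S \<subseteq> dgen D Y\<close>] by blast
  show ?thesis
  proof (rule that[OF T(1,2)])
    fix L assume L: "frac_ideal D L" "L \<subseteq> D" "T \<subseteq> L"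
    have "dgen D T \<subseteq> L" using dgen_least[OF frac_ideal_dmod[OF L(1)] L(3)] .
    moreover have "J \<subseteq> dgen D T" using dgen_least[OF dmod_dgen T(3)] S(2) by simp
    ultimately have "st J \<subseteq> st L"
      using J(1) unfolding fg_ideal_def by (intro st_mono[OF _ L(1)]) auto
    then show "st L = D" using st_eq_D_if_one_mem[OF L(1,2)] J(3) by blast
  qed
qed

lemma star_dgen:
  assumes "Y \<subseteq> D" "y \<in> Y" "y \<noteq> 0"
  shows "star_ideal D st (st (dgen D Y))" "st (dgen D Y) \<subseteq> D" "Y \<subseteq> st (dgen D Y)"
proof -
  have f: "frac_ideal D (dgen D Y)" using frac_ideal_dgen[OF assms] .
  show "star_ideal D st (st (dgen D Y))" using star_ideal_st[OF f] .
  show "st (dgen D Y) \<subseteq> D" using st_subset_D[OF f dgen_least[OF dmod_D assms(1)]] .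
  show "Y \<subseteq> st (dgen D Y)" using dgen_base[of Y] st_ext[OF f] by (rule order_trans)
qed

lemma star_fin_type_extend:
  assumes I: "star_fin_type D st I" "I \<subseteq> D" and T: "finite T" "T \<subseteq> D"
  shows "star_fin_type D st (st (dgen D (I \<union> T)))" "st (dgen D (I \<union> T)) \<subseteq> D"
    "I \<union> T \<subseteq> st (dgen D (I \<union> T))"
proof -
  obtain y where y: "y \<in> I" "y \<noteq> 0" using frac_ideal_nonzero[OF star_fin_type_frac_ideal[OF I(1)]] by blast
  have Y: "I \<union> T \<subseteq> D" "y \<in> I \<union> T" using I(2) T(2) y(1) by auto
  show "st (dgen D (I \<union> T)) \<subseteq> D" "I \<union> T \<subseteq> st (dgen D (I \<union> T))"
    using star_dgen[OF Y y(2)] by blast+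
  obtain J0 where J0: "fg_ideal D J0" "I = st J0" using I(1) unfolding star_fin_type_def by blast
  then obtain S0 where S0: "finite S0" "J0 = dgen D S0" unfolding fg_ideal_def by blast
  have fJ0: "frac_ideal D J0" using J0(1) unfolding fg_ideal_def by blast
  have S0I: "S0 \<subseteq> I"
    unfolding J0(2) using dgen_base[of S0] st_ext[OF fJ0] unfolding S0(2)[symmetric] by (rule order_trans)
  define J where "J = dgen D (S0 \<union> T)"
  have J0J: "J0 \<subseteq> J" unfolding J_def S0(2) by (rule dgen_mono) blast
  have JD: "J \<subseteq> D" unfolding J_def using S0I I(2) T(2) by (intro dgen_least[OF dmod_D]) blast
  have fJ: "frac_ideal D J"
    using frac_idealI[OF dmod_dgen JD[unfolded J_def]] frac_ideal_nonzero[OF fJ0] J0J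
    unfolding J_def by blast
  have "finite (S0 \<union> T)" using S0(1) T(1) by simp
  then have fgJ: "fg_ideal D J" unfolding fg_ideal_def using fJ J_def by blast
  have fIT: "frac_ideal D (dgen D (I \<union> T))" using frac_ideal_dgen[OF Y y(2)] .
  have "st J \<subseteq> st (dgen D (I \<union> T))"
    using st_mono[OF fJ fIT] dgen_mono[of "S0 \<union> T" "I \<union> T"] S0I unfolding J_def by blast
  moreover have "st (dgen D (I \<union> T)) \<subseteq> st J"
  proof -
    have "I \<subseteq> st J" using st_mono[OF fJ0 fJ J0J] J0(2) by simp
    moreover have "T \<subseteq> st J" using st_ext[OF fJ] dgen_base[of "S0 \<union> T"] unfolding J_def by blast
    ultimately have "I \<union> T \<subseteq> st J" by (rule Un_least)
    then have "dgen D (I \<union> T) \<subseteq> st J"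
      by (rule dgen_least[OF frac_ideal_dmod[OF st_frac_ideal[OF fJ]]])
    then show ?thesis using st_mono[OF fIT st_frac_ideal[OF fJ]] st_idem[OF fJ] by simp
  qed
  ultimately have "st (dgen D (I \<union> T)) = st J" by (rule antisym[rotated])
  then show "star_fin_type D st (st (dgen D (I \<union> T)))"
    unfolding star_fin_type_def using star_ideal_st[OF fJ] fgJ by auto
qed

lemma star_ideal_absorb:
  assumes I: "star_ideal D st I" "I \<subseteq> D" and T: "T \<subseteq> D" "st (dgen D (I \<union> T)) = D"
    and B: "B \<subseteq> D" "\<And>b t. b \<in> B \<Longrightarrow> t \<in> T \<Longrightarrow> b * t \<in> I"
  shows "B \<subseteq> I"
proof
  fix b assume "b \<in> B"
  have fI: "frac_ideal D I" using I(1) unfolding star_ideal_def by blast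
  obtain y where y: "y \<in> I" "y \<noteq> 0" using frac_ideal_nonzero[OF fI] by blast
  have "I \<union> T \<subseteq> D" "y \<in> I \<union> T" using I(2) T(1) y(1) by auto
  then have f: "frac_ideal D (dgen D (I \<union> T))" using frac_ideal_dgen y(2) by blast
  have "b \<in> D" using \<open>b \<in> B\<close> B(1) by blast
  note colon = dmod_colon[OF frac_ideal_dmod[OF fI] this]
  have "T \<subseteq> {x. b * x \<in> I}" using B(2)[OF \<open>b \<in> B\<close>] by blast
  with colon(2) have "I \<union> T \<subseteq> {x. b * x \<in> I}" by (rule Un_least)
  then have "dgen D (I \<union> T) \<subseteq> {x. b * x \<in> I}" by (rule dgen_least[OF colon(1)])
  then show "b \<in> I" using star_ideal_cancel[OF f T(2) \<open>b \<in> D\<close> _ I(1)] by blast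
qed

lemma star_homogD:
  assumes "star_homog D st I"
  shows "star_fin_type D st I" "I \<subseteq> D" "I \<noteq> D"
    and "\<And>J L. star_fin_type D st J \<Longrightarrow> J \<subseteq> D \<Longrightarrow> I \<subseteq> J \<Longrightarrow>
      star_fin_type D st L \<Longrightarrow> L \<subseteq> D \<Longrightarrow> I \<subseteq> L \<Longrightarrow> st (ideal_sum J L) = D \<Longrightarrow> J = D \<or> L = D"
  using assms unfolding star_homog_def by blast+

lemma star_homog_dgen_split:
  assumes H: "star_homog D st I" and T1: "finite T1" "T1 \<subseteq> D" and T2: "finite T2" "T2 \<subseteq> D"
    and unit: "\<And>L. frac_ideal D L \<Longrightarrow> L \<subseteq> D \<Longrightarrow> T1 \<union> T2 \<subseteq> L \<Longrightarrow> st L = D"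
  shows "st (dgen D (I \<union> T1)) = D \<or> st (dgen D (I \<union> T2)) = D"
proof -
  note Ifin = star_homogD(1,2)[OF H]
  define J where "J = st (dgen D (I \<union> T1))"
  define L where "L = st (dgen D (I \<union> T2))"
  note J = star_fin_type_extend[OF Ifin T1, folded J_def]
  note L = star_fin_type_extend[OF Ifin T2, folded L_def]
  have dJ: "dmod D J" using frac_ideal_dmod[OF star_fin_type_frac_ideal[OF J(1)]] .
  have dL: "dmod D L" using frac_ideal_dmod[OF star_fin_type_frac_ideal[OF L(1)]] .
  have "T1 \<union> T2 \<subseteq> ideal_sum J L"
    using J(3) L(3) ideal_sum_left[OF dL, of J] ideal_sum_right[OF dJ, of L] by blast
  then have "st (ideal_sum J L) = D"
    using unit frac_ideal_sum[OF star_fin_type_frac_ideal[OF J(1)] dL J(2) L(2)]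
      ideal_sum_subset_D[OF J(2) L(2)] by blast
  then have "J = D \<or> L = D" using star_homogD(4)[OF H J(1,2) _ L(1,2)] J(3) L(3) by blast
  then show ?thesis unfolding J_def L_def .
qed

theorem star_homog_comaximal_prod:
  assumes A: "dmod D A" "A \<subseteq> D" "A \<noteq> {0}" and B: "dmod D B" "B \<subseteq> D"
    and AB: "st (ideal_sum A B) = D" and I: "star_homog D st I" "ideal_prod A B \<subseteq> I"
  shows "A \<subseteq> I \<or> B \<subseteq> I"
proof -
  note Ifin = star_homogD(1,2)[OF I(1)]
  have sI: "star_ideal D st I" using star_fin_type_star_ideal[OF Ifin(1)] .
  have prod: "a * b \<in> I" if "a \<in> A" "b \<in> B" for a b
    using mult_mem_ideal_prod[OF that] I(2) by blast
  obtain a where "a \<in> A" "a \<noteq> 0" using A(3) dmodD(1)[OF A(1)] by blast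
  then have "frac_ideal D (dgen D (A \<union> B))" using frac_ideal_dgen[of "A \<union> B" a] A(2) B(2) by blast
  moreover have "st (dgen D (A \<union> B)) = D" using AB dgen_Un_eq_ideal_sum[OF A(1) B(1)] by simp
  ultimately obtain T where T: "finite T" "T \<subseteq> A \<union> B"
    and unit: "\<And>L. frac_ideal D L \<Longrightarrow> L \<subseteq> D \<Longrightarrow> T \<subseteq> L \<Longrightarrow> st L = D"
    by (rule finite_generators_of_star_eq_D) blast
  have TA: "finite (T \<inter> A)" "T \<inter> A \<subseteq> D" and TB: "finite (T \<inter> B)" "T \<inter> B \<subseteq> D"
    using T A(2) B(2) by auto
  have "st (dgen D (I \<union> (T \<inter> A))) = D \<or> st (dgen D (I \<union> (T \<inter> B))) = D"
  proof (rule star_homog_dgen_split[OF I(1) TA TB])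
    fix L assume "frac_ideal D L" "L \<subseteq> D" "T \<inter> A \<union> T \<inter> B \<subseteq> L"
    then show "st L = D" using unit T(2) by blast
  qed
  then show ?thesis
  proof
    assume "st (dgen D (I \<union> (T \<inter> A))) = D"
    then have "B \<subseteq> I"
      by (rule star_ideal_absorb[OF sI Ifin(2) TA(2) _ B(2)]) (metis IntD2 mult.commute prod)
    then show ?thesis ..
  next
    assume "st (dgen D (I \<union> (T \<inter> B))) = D"
    then have "A \<subseteq> I"
      by (rule star_ideal_absorb[OF sI Ifin(2) TB(2) _ A(2)]) (use prod in auto)
    then show ?thesis ..
  qed
qed

lemma max_star_idealD:
  assumes "max_star_ideal D st M"
  shows "star_ideal D st M" "frac_ideal D M" "dmod D M" "M \<subseteq> D" "M \<noteq> D" "1 \<notin> M"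
proof -
  show sM: "star_ideal D st M" and MD: "M \<subseteq> D" "M \<noteq> D"
    using assms unfolding max_star_ideal_def by blast+
  show fM: "frac_ideal D M" using sM unfolding star_ideal_def by blast
  show dM: "dmod D M" using frac_ideal_dmod[OF fM] .
  show "1 \<notin> M" using D_subset_if_one_mem[OF dM] MD by blast
qed

lemma max_star_ideal_dgen_insert:
  assumes M: "max_star_ideal D st M" and s: "s \<in> D" "s \<notin> M"
  shows "st (dgen D (M \<union> {s})) = D"
proof -
  note Mp = max_star_idealD[OF M]
  have "s \<noteq> 0" using s(2) dmodD(1)[OF Mp(3)] by blast
  moreover have Y: "M \<union> {s} \<subseteq> D" "s \<in> M \<union> {s}" using Mp(4) s(1) by auto
  ultimately have N: "star_ideal D st (st (dgen D (M \<union> {s})))" "st (dgen D (M \<union> {s})) \<subseteq> D"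
    "M \<union> {s} \<subseteq> st (dgen D (M \<union> {s}))"
    using star_dgen[OF Y] by blast+
  then have "M \<subseteq> st (dgen D (M \<union> {s}))" "st (dgen D (M \<union> {s})) \<noteq> M" using s(2) by blast+
  then show ?thesis using M N(1,2) unfolding max_star_ideal_def by blast
qed

lemma max_star_ideal_prime:
  assumes M: "max_star_ideal D st M" and "x \<in> D" "x \<notin> M" "y \<in> D" "x * y \<in> M"
  shows "y \<in> M"
proof -
  note Mp = max_star_idealD[OF M]
  have "{y} \<subseteq> M"
    by (rule star_ideal_absorb[OF Mp(1) Mp(4) _ max_star_ideal_dgen_insert[OF M assms(2,3)]])
      (use assms(2,4,5) in \<open>auto simp: mult.commute\<close>)
  then show ?thesis by simp
qed

lemma star_ideal_Union_chain:
  assumes C: "C \<noteq> {}" "subset.chain \<A> C"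
    and \<A>: "\<And>X. X \<in> \<A> \<Longrightarrow> star_ideal D st X \<and> X \<subseteq> D"
  shows "star_ideal D st (\<Union>C)"
proof -
  have CA: "C \<subseteq> \<A>" and comp: "\<And>X Y. X \<in> C \<Longrightarrow> Y \<in> C \<Longrightarrow> X \<subseteq> Y \<or> Y \<subseteq> X"
    using C(2) unfolding subset_chain_def by blast+
  have fX: "frac_ideal D X" "st X = X" "X \<subseteq> D" if "X \<in> C" for X
    using \<A> CA that unfolding star_ideal_def by blast+
  note dX = frac_ideal_dmod[OF fX(1)]
  obtain X0 where X0: "X0 \<in> C" using C(1) by blast
  have "dmod D (\<Union>C)"
    unfolding dmod_def
  proof (intro conjI ballI)
    show "0 \<in> \<Union>C" using dmodD(1)[OF dX[OF X0]] X0 by blast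
  next
    fix x y assume "x \<in> \<Union>C" "y \<in> \<Union>C"
    then obtain X Y where XY: "X \<in> C" "Y \<in> C" "x \<in> X" "y \<in> Y" by blast
    then have "x + y \<in> X \<or> x + y \<in> Y"
      using comp[OF XY(1,2)] dmodD(2)[OF dX[OF XY(1)]] dmodD(2)[OF dX[OF XY(2)]] by blast
    then show "x + y \<in> \<Union>C" using XY(1,2) by blast
  next
    fix d x assume "d \<in> D" "x \<in> \<Union>C"
    then show "d * x \<in> \<Union>C" using dmodD(3)[OF dX] by blast
  qed
  moreover have "\<Union>C \<subseteq> D" using fX(3) by blast
  moreover have "\<Union>C \<noteq> {0}" using frac_ideal_nonzero[OF fX(1)[OF X0]] X0 by blast
  ultimately have fU: "frac_ideal D (\<Union>C)" by (rule frac_idealI)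
  have "st (\<Union>C) \<subseteq> \<Union>C"
  proof
    fix z assume "z \<in> st (\<Union>C)"
    then obtain J where J: "fg_ideal D J" "J \<subseteq> \<Union>C" "z \<in> st J"
      using finite_char fU unfolding finite_character_def by blast
    then obtain S where S: "finite S" "J = dgen D S" unfolding fg_ideal_def by blast
    have "S \<subseteq> \<Union>C" using dgen_base[of S] J(2) unfolding S(2) by (rule order_trans)
    then obtain X where X: "X \<in> C" "S \<subseteq> X" using finite_subset_Union_chain[OF S(1) _ C] by blast
    have "J \<subseteq> X" using dgen_least[OF dX[OF X(1)] X(2)] S(2) by simp
    then have "st J \<subseteq> X" using st_mono[OF _ fX(1)[OF X(1)]] fX(2)[OF X(1)] J(1)
      unfolding fg_ideal_def by blast
    then show "z \<in> \<Union>C" using J(3) X(1) by blast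
  qed
  then show ?thesis unfolding star_ideal_def using fU st_ext[OF fU] by blast
qed

lemma max_star_ideal_exists:
  assumes "star_ideal D st B" "B \<subseteq> D" "B \<noteq> D"
  obtains M where "max_star_ideal D st M" "B \<subseteq> M"
proof -
  define \<A> where "\<A> = {N. star_ideal D st N \<and> N \<subseteq> D \<and> N \<noteq> D \<and> B \<subseteq> N}"
  have "\<exists>M\<in>\<A>. \<forall>X\<in>\<A>. M \<subseteq> X \<longrightarrow> X = M"
  proof (rule subset_Zorn_nonempty)
    show "\<A> \<noteq> {}" using assms unfolding \<A>_def by blast
  next
    fix C assume C: "C \<noteq> {}" "subset.chain \<A> C"
    then have CA: "C \<subseteq> \<A>" unfolding subset_chain_def by blast
    have "star_ideal D st (\<Union>C)" using star_ideal_Union_chain[OF C] unfolding \<A>_def by blast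
    moreover have "\<Union>C \<subseteq> D" "B \<subseteq> \<Union>C" using CA C(1) unfolding \<A>_def by blast+
    moreover have "1 \<notin> X" if "X \<in> C" for X
      using CA that D_subset_if_one_mem[of X] frac_ideal_dmod unfolding \<A>_def star_ideal_def by blast
    then have "\<Union>C \<noteq> D" using D_one by blast
    ultimately show "\<Union>C \<in> \<A>" unfolding \<A>_def by blast
  qed
  then obtain M where M: "M \<in> \<A>" "\<forall>X\<in>\<A>. M \<subseteq> X \<longrightarrow> X = M" by blast
  have "max_star_ideal D st M"
    unfolding max_star_ideal_def
  proof (intro conjI allI impI)
    show "star_ideal D st M" "M \<subseteq> D" "M \<noteq> D" using M(1) unfolding \<A>_def by blast+
    fix N assume "star_ideal D st N \<and> N \<subseteq> D \<and> N \<noteq> D \<and> M \<subseteq> N"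
    moreover from this have "N \<in> \<A>" using M(1) unfolding \<A>_def by blast
    ultimately show "N = M" using M(2) by blast
  qed
  then show thesis using that M(1) unfolding \<A>_def by blast
qed

lemma st_dgen_least:
  assumes N: "star_ideal D st N" and "frac_ideal D (dgen D Y)" "Y \<subseteq> N"
  shows "st (dgen D Y) \<subseteq> N"
proof -
  have fN: "frac_ideal D N" "st N = N" using N unfolding star_ideal_def by blast+
  show ?thesis
    using st_mono[OF assms(2) fN(1) dgen_least[OF frac_ideal_dmod[OF fN(1)] assms(3)]] fN(2) by simp
qed

lemma star_homog_dgen_insert:
  assumes H: "star_homog D st B" and M: "max_star_ideal D st M" "B \<subseteq> M"
    and s: "s \<in> D" "s \<notin> M"
  shows "st (dgen D (B \<union> {s})) = D"
proof -
  note Hp = star_homogD[OF H] and Mp = max_star_idealD[OF M(1)]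
  have "s \<noteq> 0" using s(2) dmodD(1)[OF Mp(3)] by blast
  then have fMs: "frac_ideal D (dgen D (M \<union> {s}))"
    by (intro frac_ideal_dgen[of _ s]) (use Mp(4) s(1) in auto)
  obtain T where T: "finite T" "T \<subseteq> M \<union> {s}"
    and unit: "\<And>L. frac_ideal D L \<Longrightarrow> L \<subseteq> D \<Longrightarrow> T \<subseteq> L \<Longrightarrow> st L = D"
    using finite_generators_of_star_eq_D[OF fMs max_star_ideal_dgen_insert[OF M(1) s]] by blast
  have TM: "finite (T - {s})" "T - {s} \<subseteq> M" using T by auto
  have "st (dgen D (B \<union> (T - {s}))) = D \<or> st (dgen D (B \<union> {s})) = D"
  proof (rule star_homog_dgen_split[OF H])
    show "finite (T - {s})" "T - {s} \<subseteq> D" "finite {s}" "{s} \<subseteq> D" using TM Mp(4) s(1) by auto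
    fix L assume "frac_ideal D L" "L \<subseteq> D" "T - {s} \<union> {s} \<subseteq> L"
    then show "st L = D" using unit by blast
  qed
  moreover have "st (dgen D (B \<union> (T - {s}))) \<subseteq> M"
  proof (rule st_dgen_least[OF Mp(1)])
    obtain y where "y \<in> B" "y \<noteq> 0"
      using frac_ideal_nonzero[OF star_fin_type_frac_ideal[OF Hp(1)]] by blast
    then show "frac_ideal D (dgen D (B \<union> (T - {s})))"
      by (intro frac_ideal_dgen[of _ y]) (use Hp(2) TM(2) Mp(4) in auto)
    show "B \<union> (T - {s}) \<subseteq> M" using M(2) TM(2) by blast
  qed
  ultimately show ?thesis using Mp(4,5) by blast
qed

lemma star_homog_max_star_ideal_unique:
  assumes H: "star_homog D st B"
    and M1: "max_star_ideal D st M1" "B \<subseteq> M1" and M2: "max_star_ideal D st M2" "B \<subseteq> M2"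
  shows "M1 = M2"
proof (rule ccontr)
  assume "M1 \<noteq> M2"
  note P1 = max_star_idealD[OF M1(1)] and P2 = max_star_idealD[OF M2(1)]
  have "\<not> M1 \<subseteq> M2" using M1(1) P2(1,4,5) \<open>M1 \<noteq> M2\<close> unfolding max_star_ideal_def by blast
  then obtain s where s: "s \<in> M1" "s \<notin> M2" by blast
  have sD: "s \<in> D" "s \<noteq> 0" using s P1(4) dmodD(1)[OF P2(3)] by auto
  have "st (dgen D (B \<union> {s})) \<subseteq> M1"
  proof (rule st_dgen_least[OF P1(1)])
    show "frac_ideal D (dgen D (B \<union> {s}))"
      by (intro frac_ideal_dgen[of _ s]) (use sD M1(2) P1(4) in auto)
    show "B \<union> {s} \<subseteq> M1" using M1(2) s(1) by blast
  qed
  moreover have "st (dgen D (B \<union> {s})) = D" using star_homog_dgen_insert[OF H M2 sD(1) s(2)] .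
  ultimately show False using P1(4,5) by blast
qed

lemma M_of_star_homog:
  assumes "star_homog D st B" "max_star_ideal D st M" "B \<subseteq> M"
  shows "M_of D st B = M"
  unfolding M_of_def
  using star_homog_max_star_ideal_unique[OF assms(1)] assms(2,3) by (intro the_equality) blast+

lemma ideal_prod_localization_subset:
  assumes M: "max_star_ideal D st M" and B: "dmod D B" and X: "X \<subseteq> B"
  shows "ideal_prod X (localization D M) \<subseteq> {y. \<exists>s\<in>D. s \<notin> M \<and> s * y \<in> B}"
  unfolding ideal_prod_eq_finsums
proof (rule finsums_least)
  note Mp = max_star_idealD[OF M]
  show "0 \<in> {y. \<exists>s\<in>D. s \<notin> M \<and> s * y \<in> B}" using D_one Mp(6) dmodD(1)[OF B] by force
next
  fix u y assume "u \<in> elem_prods X (localization D M)" "y \<in> {y. \<exists>s\<in>D. s \<notin> M \<and> s * y \<in> B}"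
  then obtain p c t s where p: "p \<in> B" and ct: "c \<in> D" "t \<in> D" "t \<notin> M" "u = p * (c / t)"
    and s: "s \<in> D" "s \<notin> M" "s * y \<in> B"
    using X unfolding elem_prods_def localization_def by blast
  have "t \<noteq> 0" using ct(3) dmodD(1)[OF max_star_idealD(3)[OF M]] by blast
  then have "(t * s) * (u + y) = s * c * p + t * (s * y)" using ct(4) by (simp add: field_simps)
  also have "\<dots> \<in> B" using dmodD[OF B] p ct(1,2) s D_mult by simp
  finally have "(t * s) * (u + y) \<in> B" .
  moreover have "t * s \<in> D" "t * s \<notin> M"
    using D_mult[OF ct(2) s(1)] max_star_ideal_prime[OF M ct(2,3) s(1)] s(2) by blast+
  ultimately show "u + y \<in> {y. \<exists>s\<in>D. s \<notin> M \<and> s * y \<in> B}" by blast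
qed

lemma comaximal_not_subset_max_star_ideal:
  assumes M: "max_star_ideal D st M" and A: "dmod D A" "A \<subseteq> D"
    and B: "frac_ideal D B" "B \<subseteq> M" and AB: "st (ideal_sum A B) = D"
  shows "\<not> A \<subseteq> M"
proof
  assume "A \<subseteq> M"
  note Mp = max_star_idealD[OF M]
  have BD: "B \<subseteq> D" using B(2) Mp(4) by blast
  have "ideal_sum A B \<noteq> {0}"
    using frac_ideal_nonzero[OF B(1)] ideal_sum_right[OF A(1), of B] by blast
  then have f: "frac_ideal D (ideal_sum A B)"
    by (rule frac_idealI[OF dmod_ideal_sum[OF A(1) frac_ideal_dmod[OF B(1)]] ideal_sum_subset_D[OF A(2) BD]])
  have "ideal_sum A B \<subseteq> M" using \<open>A \<subseteq> M\<close> B(2) dmodD(2)[OF Mp(3)] unfolding ideal_sum_def by blast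
  then have "st (ideal_sum A B) \<subseteq> M" using st_mono[OF f Mp(2)] Mp(1) unfolding star_ideal_def by simp
  then show False using AB Mp(4,5) by blast
qed

theorem star_homog_localization_contract:
  assumes A: "dmod D A" "A \<subseteq> D" and B: "dmod D B"
    and AB: "st (ideal_sum A B) = D" and H: "star_homog D st B"
  shows "ideal_prod (st (ideal_prod A B)) (localization D (M_of D st B)) \<inter> D = B"
proof -
  note Hp = star_homogD[OF H]
  have sB: "star_ideal D st B" using star_fin_type_star_ideal[OF Hp(1)] .
  then have fB: "frac_ideal D B" "st B = B" unfolding star_ideal_def by blast+
  obtain M where M: "max_star_ideal D st M" "B \<subseteq> M"
    using max_star_ideal_exists[OF sB Hp(2,3)] by blast
  obtain a where a: "a \<in> A" "a \<notin> M"
    using comaximal_not_subset_max_star_ideal[OF M(1) A fB(1) M(2) AB] by blast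
  have aD: "a \<in> D" "a \<noteq> 0" using a A(2) dmodD(1)[OF max_star_idealD(3)[OF M(1)]] by auto
  define P where "P = ideal_prod A B"
  have PB: "P \<subseteq> B" unfolding P_def using ideal_prod_subset_right[OF B A(2)] .
  obtain b0 where "b0 \<in> B" "b0 \<noteq> 0" using frac_ideal_nonzero[OF fB(1)] by blast
  then have "a * b0 \<in> P" "a * b0 \<noteq> 0" using mult_mem_ideal_prod[OF a(1)] aD(2) unfolding P_def by auto
  then have fP: "frac_ideal D P"
    using frac_idealI[OF dmod_ideal_prod[OF A(1)]] PB Hp(2) unfolding P_def by blast
  have stPB: "st P \<subseteq> B" using st_mono[OF fP fB(1) PB] fB(2) by simp
  show ?thesis unfolding M_of_star_homog[OF H M] P_def[symmetric]
  proof (intro equalityI subsetI)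
    fix x assume x: "x \<in> ideal_prod (st P) (localization D M) \<inter> D"
    then obtain s where s: "s \<in> D" "s \<notin> M" "s * x \<in> B"
      using ideal_prod_localization_subset[OF M(1) B stPB] by blast
    have "{x} \<subseteq> B"
      by (rule star_ideal_absorb[OF sB Hp(2) _ star_homog_dgen_insert[OF H M s(1,2)]])
        (use s x in \<open>auto simp: mult.commute\<close>)
    then show "x \<in> B" by simp
  next
    fix b assume b: "b \<in> B"
    have "a * b \<in> st P" using st_ext[OF fP] mult_mem_ideal_prod[OF a(1) b] unfolding P_def by blast
    moreover have "1 / a \<in> localization D M" unfolding localization_def using D_one aD(1) a(2) by blast
    ultimately have "(a * b) * (1 / a) \<in> ideal_prod (st P) (localization D M)"
      by (rule mult_mem_ideal_prod)
    then show "b \<in> ideal_prod (st P) (localization D M) \<inter> D" using b Hp(2) aD(2) by auto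
  qed
qed

end

theorem corollaryH:
  fixes D :: "('k::field) set" and st :: "'k set \<Rightarrow> 'k set" and A B :: "'k set"
  assumes "domain_with_qf D"
    and "star_operation D st" and "finite_character D st"
    and "dmod D A" and "A \<subseteq> D" and "A \<noteq> {0}"
    and "dmod D B" and "B \<subseteq> D" and "B \<noteq> {0}"
    and "st (ideal_sum A B) = D"
  shows "(\<forall>I. star_homog D st I \<and> ideal_prod A B \<subseteq> I \<longrightarrow> A \<subseteq> I \<or> B \<subseteq> I)
       \<and> (star_homog D st B \<longrightarrow>
            ideal_prod (st (ideal_prod A B)) (localization D (M_of D st B)) \<inter> D = B)"
proof -
  interpret star_domain D st using assms(1-3) by unfold_locales
  show ?thesis
    using star_homog_comaximal_prod[OF assms(4-8,10)]
      star_homog_localization_contract[OF assms(4,5,7,10)] by blast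
qed

end
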